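(* Let $f_1,\dots,f_n:\mathbb{R}^d\to\mathbb{R}$ satisfy Assumption A1 below, and write $F=(f_1,\dots,f_n)$. Define the map $x^*:\Delta^{n-1}\to\mathrm{Pareto}(F)$ by \[x^*(\beta)\equiv x_\beta:=\operatorname*{argmin}_{x\in\mathbb{R}^d} f_\beta(x).\] Then $x^*$ has derivative \[\nabla x^*(\beta)=-\nabla^2 f_\beta(x_\beta)^{-1}\nabla F(x_\beta)^\top,\] so that the map $\beta\mapsto(x_\beta,\beta)$ is a diffeomorphism of $\Delta^{n-1}$ with the Pareto manifold $\mathcal{P}(F)$.
   Context: Assumption A1: each $f_i$ is twice differentiable, $\mu$-strongly convex, and has $L$-Lipschitz continuous gradient, i.e. $\mu\mathbf{I}\preceq\nabla^2 f_i(x)\preceq L\mathbf{I}$ for all $x$ (with $0<\mu\le L$). $\Delta^{n-1}=\{\beta\in\mathbb{R}^n:\sum_i\beta_i=1,\ \beta_i\ge0\}$. For $\beta\in\Delta^{n-1}$, $f_\beta(x):=\sum_{i=1}^n\beta_i f_i(x)$. $\nabla F(x)\in\mathbb{R}^{n\times d}$ is the Jacobian of $F$ (rows $\nabla f_i(x)^\top$). A point $x$ is Pareto optimal if for all $x'$, $f_i(x')<f_i(x)$ for some $i$ implies $f_j(x')>f_j(x)$ for some $j$; $\mathrm{Pareto}(F)$ is the set of Pareto optimal points (under A1 it equals the set of $x$ with $\nabla f_\beta(x)=0$ for some $\beta\in\Delta^{n-1}$). The Pareto manifold is $\mathcal{P}(F)=\{(x,\beta)\in\mathbb{R}^d\times\Delta^{n-1}:\nabla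 f_\beta(x)=0\}$. *)

theory Defs
  imports "HOL-Analysis.Analysis"
begin

definition prob_simplex :: "(real ^ 'n::finite) set" where
  "prob_simplex = {\<beta>. (\<Sum>i\<in>UNIV. \<beta> $ i) = 1 \<and> (\<forall>i. 0 \<le> \<beta> $ i)}"

definition fbeta :: "('n::finite \<Rightarrow> real ^ 'd::finite \<Rightarrow> real) \<Rightarrow> real ^ 'n \<Rightarrow> real ^ 'd \<Rightarrow> real" where
  "fbeta f \<beta> x = (\<Sum>i\<in>UNIV. \<beta> $ i * f i x)"

definition xstar :: "('n::finite \<Rightarrow> real ^ 'd::finite \<Rightarrow> real) \<Rightarrow> real ^ 'n \<Rightarrow> real ^ 'd" where
  "xstar f \<beta> = (SOME x. \<forall>y. fbeta f \<beta> x \<le> fbeta f \<beta> y)"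

definition pareto_optimal :: "('n \<Rightarrow> 'a \<Rightarrow> real) \<Rightarrow> 'a \<Rightarrow> bool" where
  "pareto_optimal f x \<longleftrightarrow>
     (\<forall>x'. (\<exists>i. f i x' < f i x) \<longrightarrow> (\<exists>j. f j x' > f j x))"

definition Pareto :: "('n \<Rightarrow> 'a \<Rightarrow> real) \<Rightarrow> 'a set" where
  "Pareto f = {x. pareto_optimal f x}"

text \<open>Pareto manifold P(F) = {(x,beta) in R^d x Delta : grad f_beta(x) = 0}; the gradient
  of f_beta at x is given by the gradients g i x of the f i.\<close>
definition pareto_manifold ::
  "('n::finite \<Rightarrow> real ^ 'd::finite \<Rightarrow> real ^ 'd) \<Rightarrow> ((real ^ 'd) \<times> (real ^ 'n)) set" where
  "pareto_manifold g = {(x, \<beta>). \<beta> \<in> prob_simplex \<and> (\<Sum>i\<in>UNIV. \<beta> $ i *\<^sub>R g i x) = 0}"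

definition jacobianF :: "('n::finite \<Rightarrow> real ^ 'd::finite \<Rightarrow> real ^ 'd) \<Rightarrow> real ^ 'd \<Rightarrow> real ^ 'd ^ 'n" where
  "jacobianF g x = (\<chi> i. g i x)"

text \<open>Hessian of f_beta at x, from the Hessians H i x of the f i.\<close>
definition hessbeta ::
  "('n::finite \<Rightarrow> real ^ 'd::finite \<Rightarrow> real ^ 'd ^ 'd) \<Rightarrow> real ^ 'n \<Rightarrow> real ^ 'd \<Rightarrow> real ^ 'd ^ 'd" where
  "hessbeta H \<beta> x = (\<Sum>i\<in>UNIV. \<beta> $ i *\<^sub>R H i x)"

definition diffeomorphism_on ::
  "('a::euclidean_space \<Rightarrow> 'b::euclidean_space) \<Rightarrow> 'a set \<Rightarrow> 'b set \<Rightarrow> bool" where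
  "diffeomorphism_on \<Phi> S T \<longleftrightarrow>
     bij_betw \<Phi> S T \<and> \<Phi> differentiable_on S \<and>
     (\<exists>\<Psi>. \<Psi> differentiable_on T \<and> (\<forall>x\<in>S. \<Psi> (\<Phi> x) = x) \<and> (\<forall>y\<in>T. \<Phi> (\<Psi> y) = y))"

end

theory Submission
  imports Defs
begin

(* For weights on the simplex, the Hessian of f_beta is a convex combination of matrices
   bounded below by mu I, so grad f_beta is mu-strongly monotone. Hence f_beta has exactly one
   critical point, its minimiser x_beta, and a minimiser of a nonnegative combination of the
   f_i that is unique must be Pareto optimal. Comparing the critical points for two weights,
   strong monotonicity gives mu |x_beta' - x_beta| <= |grad f_beta'(x_beta) - grad f_beta(x_beta)|,
   which is O(|beta' - beta|). With this Lipschitz bound in hand, differentiating the identity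
   grad f_beta(x_beta) = 0 needs no inverse function theorem: the linearisation of
   (beta, x) |-> grad f_beta(x), which is invertible in x, can be solved for the increment of
   x_beta directly. The inverse of beta |-> (x_beta, beta) on the Pareto manifold is the
   projection to beta. *)

lemma matrix_inv_left:
  assumes "invertible A"
  shows "matrix_inv A ** A = mat 1"
  using someI_ex[OF assms[unfolded invertible_def]] unfolding matrix_inv_def by blast

lemma matrix_inv_mult_vec_cancel:
  fixes A :: "'a::comm_semiring_1^'n^'m"
  assumes "invertible A"
  shows "matrix_inv A *v (A *v v) = v"
  by (simp add: matrix_vector_mul_assoc matrix_inv_left[OF assms])

lemma invertible_if_coercive:
  fixes A :: "real^'n^'n"
  assumes "0 < \<mu>" and "\<And>v. \<mu> * (v \<bullet> v) \<le> v \<bullet> (A *v v)"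
  shows "invertible A"
proof -
  have "v = 0" if "A *v v = 0" for v
  proof -
    have "\<mu> * (v \<bullet> v) \<le> 0"
      using assms(2)[of v] that by simp
    then show ?thesis
      using assms(1) by (metis inner_gt_zero_iff mult_pos_pos not_le)
  qed
  then show ?thesis
    unfolding invertible_left_inverse matrix_left_invertible_ker by blast
qed

lemma strongly_monotone_if_derivative_coercive:
  fixes G :: "'a::real_inner \<Rightarrow> 'a"
  assumes der: "\<And>x. (G has_derivative G' x) (at x)"
    and coercive: "\<And>x v. \<mu> * (v \<bullet> v) \<le> v \<bullet> G' x v"
  shows "\<mu> * ((y - x) \<bullet> (y - x)) \<le> (G y - G x) \<bullet> (y - x)"
proof -
  define u where "u = y - x"
  define \<phi> where "\<phi> t = G (x + t *\<^sub>R u) \<bullet> u" for t :: real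
  have "(\<phi> has_derivative (\<lambda>s. G' (x + t *\<^sub>R u) (s *\<^sub>R u) \<bullet> u)) (at t within {0..1})" for t
  proof -
    have "((\<lambda>t. x + t *\<^sub>R u) has_derivative (\<lambda>s. s *\<^sub>R u)) (at t within {0..1})"
      by (auto intro!: derivative_eq_intros)
    from has_derivative_compose[OF this der]
    show ?thesis
      unfolding \<phi>_def using has_derivative_inner_left by (force simp: o_def)
  qed
  then obtain \<xi> where "\<phi> 1 - \<phi> 0 = G' (x + \<xi> *\<^sub>R u) (1 *\<^sub>R u) \<bullet> u"
    using mvt_simple[of 0 1 \<phi>] by force
  then have "(G y - G x) \<bullet> u = u \<bullet> G' (x + \<xi> *\<^sub>R u) u"
    unfolding \<phi>_def u_def by (simp add: inner_diff_left inner_diff_right inner_commute)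
  then show ?thesis
    using coercive[of u "x + \<xi> *\<^sub>R u"] unfolding u_def by simp
qed

lemma strongly_convex_if_gradient_strongly_monotone:
  fixes F :: "'a::real_inner \<Rightarrow> real"
  assumes grad: "\<And>x. (F has_derivative (\<lambda>v. G x \<bullet> v)) (at x)"
    and mono: "\<And>x y. \<mu> * ((y - x) \<bullet> (y - x)) \<le> (G y - G x) \<bullet> (y - x)"
  shows "F x + G x \<bullet> (y - x) + \<mu> / 2 * ((y - x) \<bullet> (y - x)) \<le> F y"
proof -
  define u where "u = y - x"
  define q where "q = u \<bullet> u"
  define \<psi> where "\<psi> t = F (x + t *\<^sub>R u) - t * (G x \<bullet> u) - \<mu> / 2 * (t * t) * q" for t :: real
  have "(\<psi> has_derivative (\<lambda>s. G (x + t *\<^sub>R u) \<bullet> (s *\<^sub>R u) - s * (G x \<bullet> u)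
          - \<mu> / 2 * (t * s + s * t) * q)) (at t within {0..1})" for t
  proof -
    have "((\<lambda>t. x + t *\<^sub>R u) has_derivative (\<lambda>s. s *\<^sub>R u)) (at t within {0..1})"
      by (auto intro!: derivative_eq_intros)
    from has_derivative_compose[OF this grad]
    show ?thesis
      unfolding \<psi>_def by (auto intro!: derivative_eq_intros simp: o_def)
  qed
  then obtain \<xi> where \<xi>: "0 < \<xi>" and
    mvt: "\<psi> 1 - \<psi> 0 = (G (x + \<xi> *\<^sub>R u) - G x) \<bullet> u - \<mu> * \<xi> * q"
    using mvt_simple[of 0 1 \<psi>] by (force simp: inner_diff_left algebra_simps)
  have "\<xi> * (\<mu> * \<xi> * q) \<le> \<xi> * ((G (x + \<xi> *\<^sub>R u) - G x) \<bullet> u)"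
    using mono[where x = x and y = "x + \<xi> *\<^sub>R u"] unfolding q_def by (simp add: algebra_simps)
  then have "0 \<le> \<psi> 1 - \<psi> 0"
    unfolding mvt using \<xi> by (simp add: mult_le_cancel_left_pos)
  then show ?thesis
    unfolding \<psi>_def u_def q_def by (simp add: algebra_simps)
qed

lemma strongly_monotone_zero_perturbation:
  fixes G G' :: "'a::real_inner \<Rightarrow> 'a"
  assumes "0 < \<mu>"
    and mono: "\<And>x y. \<mu> * ((y - x) \<bullet> (y - x)) \<le> (G' y - G' x) \<bullet> (y - x)"
    and "G' x' = 0" and "G x = 0"
  shows "\<mu> * norm (x' - x) \<le> norm (G' x - G x)"
proof -
  have "\<mu> * norm (x' - x) * norm (x' - x) \<le> (G' x' - G' x) \<bullet> (x' - x)"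
    using mono[where x = x and y = x'] by (simp add: dot_square_norm power2_eq_square mult.assoc)
  also have "\<dots> = - ((G' x - G x) \<bullet> (x' - x))"
    using assms(3,4) by (simp add: inner_diff_left)
  also have "\<dots> \<le> norm (G' x - G x) * norm (x' - x)"
    using norm_cauchy_schwarz[of "G x - G' x" "x' - x"]
    by (metis inner_minus_left minus_diff_eq norm_minus_commute)
  finally have "\<mu> * norm (x' - x) * norm (x' - x) \<le> norm (G' x - G x) * norm (x' - x)" .
  then show ?thesis
    by (cases "x' = x") (auto simp: mult_le_cancel_right_pos)
qed

lemma strongly_monotone_zero_unique:
  fixes G :: "'a::real_inner \<Rightarrow> 'a"
  assumes "0 < \<mu>"
    and "\<And>x y. \<mu> * ((y - x) \<bullet> (y - x)) \<le> (G y - G x) \<bullet> (y - x)"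
    and "G x' = 0" and "G x = 0"
  shows "x' = x"
  using strongly_monotone_zero_perturbation[where G = G and G' = G, OF assms] assms(1)
  by (simp add: mult_le_0_iff)

lemma minimum_iff_gradient_eq_0:
  fixes F :: "'a::real_inner \<Rightarrow> real"
  assumes grad: "(F has_derivative (\<lambda>v. G \<bullet> v)) (at x)"
    and convex: "\<And>y. F x + G \<bullet> (y - x) \<le> F y"
  shows "(\<forall>y. F x \<le> F y) \<longleftrightarrow> G = 0"
proof
  assume "\<forall>y. F x \<le> F y"
  then have "(\<lambda>v. G \<bullet> v) = (\<lambda>v. 0)"
    by (intro differential_zero_maxmin[of x UNIV, OF _ _ grad]) auto
  then show "G = 0"
    by (metis inner_eq_zero_iff)
qed (use convex in auto)

lemma strongly_convex_attains_minimum: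
  fixes F :: "'a::euclidean_space \<Rightarrow> real"
  assumes "0 < \<mu>" and cont: "continuous_on UNIV F"
    and cvx: "\<And>y. F 0 + G \<bullet> y + \<mu> / 2 * (y \<bullet> y) \<le> F y"
  shows "\<exists>x. \<forall>y. F x \<le> F y"
proof -
  define R where "R = 2 * norm G / \<mu>"
  have "0 \<le> R"
    unfolding R_def using \<open>0 < \<mu>\<close> by simp
  then have "\<exists>m\<in>cball 0 R. \<forall>y\<in>cball 0 R. F m \<le> F y"
    by (intro continuous_attains_inf continuous_on_subset[OF cont]) auto
  then obtain m where m: "m \<in> cball 0 R" "\<And>y. y \<in> cball 0 R \<Longrightarrow> F m \<le> F y"
    by blast
  have "F m \<le> F y" if "R < norm y" for y
  proof -
    \<comment> \<open>outside the ball the quadratic term beats the linear one, so F y > F 0\<close>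
    have "2 * norm G \<le> \<mu> * norm y"
      using that \<open>0 < \<mu>\<close> unfolding R_def by (simp add: field_simps)
    then have "norm G * norm y \<le> \<mu> / 2 * (norm y * norm y)"
      using mult_right_mono[OF _ norm_ge_zero, of "2 * norm G" "\<mu> * norm y" y] by simp
    moreover have "- (norm G * norm y) \<le> G \<bullet> y"
      using norm_cauchy_schwarz[of "- G" y] by simp
    moreover have "F m \<le> F 0"
      using m(2) \<open>0 \<le> R\<close> by simp
    ultimately show ?thesis
      using cvx[of y] by (simp add: dot_square_norm power2_eq_square)
  qed
  with m(2) show ?thesis
    by (metis mem_cball_0 not_le)
qed

lemma has_derivative_remainder_along_lipschitz:
  fixes \<Phi> :: "'a::real_normed_vector \<Rightarrow> 'c::real_normed_vector"
    and \<Psi> :: "'b::real_normed_vector \<Rightarrow> 'a"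
  assumes der: "(\<Phi> has_derivative D) (at (\<Psi> b))"
    and lip: "\<And>y. y \<in> S \<Longrightarrow> norm (\<Psi> y - \<Psi> b) \<le> C * norm (y - b)"
    and "0 < e"
  shows "\<exists>d>0. \<forall>y\<in>S. norm (y - b) < d \<longrightarrow>
           norm (\<Phi> (\<Psi> y) - \<Phi> (\<Psi> b) - D (\<Psi> y - \<Psi> b)) \<le> e * norm (y - b)"
proof -
  define C' where "C' = \<bar>C\<bar> + 1"
  have "0 < C'"
    unfolding C'_def by simp
  have lip': "norm (\<Psi> y - \<Psi> b) \<le> C' * norm (y - b)" if "y \<in> S" for y
    using lip[OF that] unfolding C'_def
    by (smt (verit, best) mult_right_mono norm_ge_zero)
  obtain d where "0 < d" and d: "\<And>z. norm (z - \<Psi> b) < d \<Longrightarrow>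
      norm (\<Phi> z - \<Phi> (\<Psi> b) - D (z - \<Psi> b)) \<le> e / C' * norm (z - \<Psi> b)"
    using der \<open>0 < e\<close> \<open>0 < C'\<close> unfolding has_derivative_at_alt by (meson divide_pos_pos)
  show ?thesis
  proof (intro exI[of _ "d / C'"] conjI ballI impI)
    show "0 < d / C'"
      using \<open>0 < d\<close> \<open>0 < C'\<close> by simp
    fix y assume "y \<in> S" and "norm (y - b) < d / C'"
    then have "norm (\<Psi> y - \<Psi> b) < d"
      using lip' \<open>0 < C'\<close> by (smt (verit, best) pos_less_divide_eq mult.commute)
    then have "norm (\<Phi> (\<Psi> y) - \<Phi> (\<Psi> b) - D (\<Psi> y - \<Psi> b)) \<le> e / C' * norm (\<Psi> y - \<Psi> b)"
      by (rule d)
    also have "\<dots> \<le> e / C' * (C' * norm (y - b))"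
      using \<open>0 < e\<close> \<open>0 < C'\<close> by (intro mult_left_mono lip'[OF \<open>y \<in> S\<close>]) simp
    finally show "norm (\<Phi> (\<Psi> y) - \<Phi> (\<Psi> b) - D (\<Psi> y - \<Psi> b)) \<le> e * norm (y - b)"
      using \<open>0 < C'\<close> by simp
  qed
qed

text \<open>Here the implicit function X is given; a Lipschitz bound at b replaces the regularity
  that the implicit function theorem would otherwise have to supply.\<close>

lemma has_derivative_implicit_within:
  fixes \<Phi> :: "'a::real_normed_vector \<times> 'b::real_normed_vector \<Rightarrow> 'c::real_normed_vector"
  assumes der: "(\<Phi> has_derivative (\<lambda>z. A (fst z) + B (snd z))) (at (b, X b))"
    and "bounded_linear A" and "bounded_linear Binv" and inv: "\<And>k. Binv (B k) = k"
    and zero: "\<And>y. y \<in> S \<Longrightarrow> \<Phi> (y, X y) = 0" and "b \<in> S"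
    and lip: "\<And>y. y \<in> S \<Longrightarrow> norm (X y - X b) \<le> C * norm (y - b)"
  shows "(X has_derivative (\<lambda>h. - Binv (A h))) (at b within S)"
proof -
  interpret Binv: bounded_linear Binv by fact
  obtain K where "0 < K" and K: "\<And>z. norm (Binv z) \<le> norm z * K"
    using Binv.pos_bounded by blast
  have graph_lip: "norm ((y, X y) - (b, X b)) \<le> (1 + C) * norm (y - b)" if "y \<in> S" for y
    using norm_Pair_le[of "y - b" "X y - X b"] lip[OF that] by (simp add: algebra_simps)
  show ?thesis
    unfolding has_derivative_within_alt
  proof (intro conjI allI impI bounded_linear_minus
      bounded_linear_compose[OF \<open>bounded_linear Binv\<close> \<open>bounded_linear A\<close>])
    fix e :: real assume "0 < e"
    then obtain d where "0 < d" and d: "\<And>y. y \<in> S \<Longrightarrow> norm (y - b) < d \<Longrightarrow>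
        norm (\<Phi> (y, X y) - \<Phi> (b, X b) - (A (y - b) + B (X y - X b))) \<le> e / K * norm (y - b)"
      using has_derivative_remainder_along_lipschitz[where \<Psi> = "\<lambda>y. (y, X y)" and S = S,
          OF der graph_lip divide_pos_pos[OF \<open>0 < e\<close> \<open>0 < K\<close>]] by auto
    show "\<exists>d>0. \<forall>y\<in>S. norm (y - b) < d \<longrightarrow>
        norm (X y - X b - - Binv (A (y - b))) \<le> e * norm (y - b)"
    proof (intro exI[of _ d] conjI ballI impI \<open>0 < d\<close>)
      fix y assume "y \<in> S" "norm (y - b) < d"
      have "X y - X b - - Binv (A (y - b))
          = - Binv (\<Phi> (y, X y) - \<Phi> (b, X b) - (A (y - b) + B (X y - X b)))"
        using zero[OF \<open>y \<in> S\<close>] zero[OF \<open>b \<in> S\<close>]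
        by (simp add: Binv.diff Binv.add Binv.neg inv)
      also have "norm \<dots> \<le> e / K * norm (y - b) * K"
        using K d[OF \<open>y \<in> S\<close> \<open>norm (y - b) < d\<close>] \<open>0 < K\<close>
        by (smt (verit) mult_right_mono norm_minus_cancel)
      finally show "norm (X y - X b - - Binv (A (y - b))) \<le> e * norm (y - b)"
        using \<open>0 < K\<close> by simp
    qed
  qed
qed

definition gradbeta ::
  "('n::finite \<Rightarrow> real ^ 'd::finite \<Rightarrow> real ^ 'd) \<Rightarrow> real ^ 'n \<Rightarrow> real ^ 'd \<Rightarrow> real ^ 'd" where
  "gradbeta g \<beta> x = (\<Sum>i\<in>UNIV. \<beta> $ i *\<^sub>R g i x)"

lemma pareto_manifold_iff:
  "(x, \<beta>) \<in> pareto_manifold g \<longleftrightarrow> \<beta> \<in> prob_simplex \<and> gradbeta g \<beta> x = 0"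
  unfolding pareto_manifold_def gradbeta_def by simp

lemma transpose_jacobianF_mult_vec: "transpose (jacobianF g x) *v h = gradbeta g h x"
  by (simp add: vec_eq_iff vector_matrix_mult_def jacobianF_def gradbeta_def sum_component
      mult.commute)

lemma sum_scaleR_matrix_vector_mult:
  fixes M :: "'i \<Rightarrow> real^'n::finite^'m::finite"
  assumes "finite A"
  shows "(\<Sum>i\<in>A. c i *\<^sub>R M i) *v v = (\<Sum>i\<in>A. c i *\<^sub>R (M i *v v))"
  using assms
  by (induction A rule: finite_induct)
    (auto simp: matrix_vector_mult_add_rdistrib scaleR_matrix_vector_assoc)

lemma hessbeta_mult_vec: "hessbeta H \<beta> x *v v = (\<Sum>i\<in>UNIV. \<beta> $ i *\<^sub>R (H i x *v v))"
  unfolding hessbeta_def by (simp add: sum_scaleR_matrix_vector_mult)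

lemma has_derivative_fbeta:
  assumes "\<And>i x. (f i has_derivative (\<lambda>v. g i x \<bullet> v)) (at x)"
  shows "(fbeta f \<beta> has_derivative (\<lambda>v. gradbeta g \<beta> x \<bullet> v)) (at x)"
proof -
  have "((\<lambda>x. \<Sum>i\<in>UNIV. \<beta> $ i * f i x) has_derivative
      (\<lambda>v. \<Sum>i\<in>UNIV. \<beta> $ i * (g i x \<bullet> v))) (at x)"
    by (intro has_derivative_sum has_derivative_mult_right assms)
  then show ?thesis
    unfolding fbeta_def[abs_def] gradbeta_def by (simp add: inner_sum_left)
qed

lemma has_derivative_gradbeta:
  assumes "\<And>i x. (g i has_derivative (\<lambda>v. H i x *v v)) (at x)"
  shows "(gradbeta g \<beta> has_derivative (\<lambda>v. hessbeta H \<beta> x *v v)) (at x)"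
  unfolding gradbeta_def[abs_def] hessbeta_mult_vec
  by (intro has_derivative_sum has_derivative_scaleR_right assms)

lemma has_derivative_gradbeta_joint:
  assumes "\<And>i x. (g i has_derivative (\<lambda>v. H i x *v v)) (at x)"
  shows "((\<lambda>z. gradbeta g (fst z) (snd z)) has_derivative
           (\<lambda>z. transpose (jacobianF g x) *v fst z + hessbeta H \<beta> x *v snd z)) (at (\<beta>, x))"
proof -
  have g: "((\<lambda>z. g i (snd z)) has_derivative (\<lambda>z. H i x *v snd z)) (at (\<beta>, x))" for i
    using has_derivative_compose[OF has_derivative_snd[OF has_derivative_ident] assms,
        where x = "(\<beta>, x)" and s = UNIV]
    by (simp add: o_def)
  have \<beta>: "((\<lambda>z. fst z $ i) has_derivative (\<lambda>z. fst z $ i)) (at (\<beta>, x))" for i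
    by (intro bounded_linear.has_derivative[OF bounded_linear_compose[OF bounded_linear_vec_nth
          bounded_linear_fst]] has_derivative_ident)
  have "((\<lambda>z. gradbeta g (fst z) (snd z)) has_derivative
      (\<lambda>z. \<Sum>i\<in>UNIV. fst (\<beta>, x) $ i *\<^sub>R (H i x *v snd z)
             + fst z $ i *\<^sub>R g i (snd (\<beta>, x))))
      (at (\<beta>, x))"
    unfolding gradbeta_def by (intro has_derivative_sum has_derivative_scaleR g \<beta>)
  then show ?thesis
    unfolding transpose_jacobianF_mult_vec hessbeta_mult_vec
    by (simp add: gradbeta_def sum.distrib add.commute)
qed

lemma gradbeta_lipschitz_weight:
  "norm (gradbeta g \<beta>' x - gradbeta g \<beta> x) \<le> (\<Sum>i\<in>UNIV. norm (g i x)) * norm (\<beta>' - \<beta>)"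
proof -
  have "norm (gradbeta g \<beta>' x - gradbeta g \<beta> x)
      = norm (\<Sum>i\<in>UNIV. (\<beta>' - \<beta>) $ i *\<^sub>R g i x)"
    unfolding gradbeta_def by (simp add: sum_subtractf[symmetric] scaleR_diff_left)
  also have "\<dots> \<le> (\<Sum>i\<in>UNIV. norm (g i x) * norm (\<beta>' - \<beta>))"
    using component_le_norm_cart[of "\<beta>' - \<beta>"]
    by (intro order_trans[OF norm_sum] sum_mono) (simp add: mult_left_mono mult.commute)
  finally show ?thesis
    by (simp add: sum_distrib_right)
qed

lemma hessbeta_coercive:
  assumes "\<beta> \<in> prob_simplex" and "\<And>i. \<mu> * (v \<bullet> v) \<le> v \<bullet> (H i x *v v)"
  shows "\<mu> * (v \<bullet> v) \<le> v \<bullet> (hessbeta H \<beta> x *v v)"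
proof -
  have "\<mu> * (v \<bullet> v) = (\<Sum>i\<in>UNIV. \<beta> $ i * (\<mu> * (v \<bullet> v)))"
    using assms(1) unfolding prob_simplex_def by (simp add: sum_distrib_right[symmetric])
  also have "\<dots> \<le> (\<Sum>i\<in>UNIV. \<beta> $ i * (v \<bullet> (H i x *v v)))"
    using assms unfolding prob_simplex_def by (intro sum_mono mult_left_mono) auto
  also have "\<dots> = v \<bullet> (hessbeta H \<beta> x *v v)"
    unfolding hessbeta_mult_vec by (simp add: inner_sum_right)
  finally show ?thesis .
qed

lemma unique_minimiser_fbeta_Pareto:
  assumes "\<beta> \<in> prob_simplex"
    and unique: "\<And>x'. (\<forall>y. fbeta f \<beta> x' \<le> fbeta f \<beta> y) \<longleftrightarrow> x' = x"
  shows "x \<in> Pareto f"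
  unfolding Pareto_def pareto_optimal_def
proof (intro CollectI allI impI)
  fix x' assume "\<exists>i. f i x' < f i x"
  then obtain i where i: "f i x' < f i x" by blast
  show "\<exists>j. f j x < f j x'"
  proof (rule ccontr)
    assume "\<not> ?thesis"
    then have "fbeta f \<beta> x' \<le> fbeta f \<beta> x"
      using assms(1) unfolding fbeta_def prob_simplex_def
      by (intro sum_mono mult_left_mono) (auto simp: not_less)
    moreover have "\<forall>y. fbeta f \<beta> x \<le> fbeta f \<beta> y"
      using unique by blast
    ultimately have "x' = x"
      using unique by (meson order_trans)
    then show False
      using i by simp
  qed
qed

locale strongly_convex_family =
  fixes f :: "'n::finite \<Rightarrow> real ^ 'd::finite \<Rightarrow> real"
    and g :: "'n \<Rightarrow> real ^ 'd \<Rightarrow> real ^ 'd"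
    and H :: "'n \<Rightarrow> real ^ 'd \<Rightarrow> real ^ 'd ^ 'd"
    and \<mu> :: real
  assumes mu_pos: "0 < \<mu>"
    and grad: "\<And>i x. (f i has_derivative (\<lambda>v. g i x \<bullet> v)) (at x)"
    and hess: "\<And>i x. (g i has_derivative (\<lambda>v. H i x *v v)) (at x)"
    and hess_lower: "\<And>i x v. \<mu> * (v \<bullet> v) \<le> v \<bullet> (H i x *v v)"
begin

lemma gradbeta_strongly_monotone:
  assumes "\<beta> \<in> prob_simplex"
  shows "\<mu> * ((y - x) \<bullet> (y - x)) \<le> (gradbeta g \<beta> y - gradbeta g \<beta> x) \<bullet> (y - x)"
  using has_derivative_gradbeta[OF hess] hessbeta_coercive[OF assms hess_lower]
  by (rule strongly_monotone_if_derivative_coercive)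

lemma fbeta_strongly_convex:
  assumes "\<beta> \<in> prob_simplex"
  shows "fbeta f \<beta> x + gradbeta g \<beta> x \<bullet> (y - x) + \<mu> / 2 * ((y - x) \<bullet> (y - x))
           \<le> fbeta f \<beta> y"
  using has_derivative_fbeta[OF grad] gradbeta_strongly_monotone[OF assms]
  by (rule strongly_convex_if_gradient_strongly_monotone)

lemma minimiser_fbeta_iff:
  assumes "\<beta> \<in> prob_simplex"
  shows "(\<forall>y. fbeta f \<beta> x \<le> fbeta f \<beta> y) \<longleftrightarrow> gradbeta g \<beta> x = 0"
proof (rule minimum_iff_gradient_eq_0[OF has_derivative_fbeta[OF grad]])
  fix y
  show "fbeta f \<beta> x + gradbeta g \<beta> x \<bullet> (y - x) \<le> fbeta f \<beta> y"
    using fbeta_strongly_convex[OF assms, of x y] mu_pos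
    by (smt (verit) inner_ge_zero mult_nonneg_nonneg half_gt_zero)
qed

lemma gradbeta_xstar:
  assumes "\<beta> \<in> prob_simplex"
  shows "gradbeta g \<beta> (xstar f \<beta>) = 0"
proof -
  have "\<exists>x. \<forall>y. fbeta f \<beta> x \<le> fbeta f \<beta> y"
  proof (rule strongly_convex_attains_minimum[OF mu_pos])
    show "continuous_on UNIV (fbeta f \<beta>)"
      using has_derivative_at_withinI[OF has_derivative_fbeta[OF grad]]
      by (rule has_derivative_continuous_on)
    show "fbeta f \<beta> 0 + gradbeta g \<beta> 0 \<bullet> y + \<mu> / 2 * (y \<bullet> y) \<le> fbeta f \<beta> y" for y
      using fbeta_strongly_convex[OF assms, of 0 y] by simp
  qed
  then show ?thesis
    unfolding xstar_def minimiser_fbeta_iff[OF assms, symmetric] by (rule someI_ex)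
qed

lemma gradbeta_eq_0_iff:
  assumes "\<beta> \<in> prob_simplex"
  shows "gradbeta g \<beta> x = 0 \<longleftrightarrow> x = xstar f \<beta>"
  using strongly_monotone_zero_unique[OF mu_pos gradbeta_strongly_monotone[OF assms]]
    gradbeta_xstar[OF assms] by blast

lemma xstar_Pareto:
  assumes "\<beta> \<in> prob_simplex"
  shows "xstar f \<beta> \<in> Pareto f"
  using assms by (rule unique_minimiser_fbeta_Pareto)
    (simp add: minimiser_fbeta_iff[OF assms] gradbeta_eq_0_iff[OF assms])

lemma xstar_lipschitz:
  assumes "\<beta> \<in> prob_simplex" and "\<beta>' \<in> prob_simplex"
  shows "norm (xstar f \<beta>' - xstar f \<beta>)
           \<le> (\<Sum>i\<in>UNIV. norm (g i (xstar f \<beta>))) / \<mu> * norm (\<beta>' - \<beta>)"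
proof -
  have "\<mu> * norm (xstar f \<beta>' - xstar f \<beta>)
      \<le> norm (gradbeta g \<beta>' (xstar f \<beta>) - gradbeta g \<beta> (xstar f \<beta>))"
    using gradbeta_strongly_monotone[OF assms(2)] gradbeta_xstar assms
    by (intro strongly_monotone_zero_perturbation[OF mu_pos]) auto
  also have "\<dots> \<le> (\<Sum>i\<in>UNIV. norm (g i (xstar f \<beta>))) * norm (\<beta>' - \<beta>)"
    by (rule gradbeta_lipschitz_weight)
  finally show ?thesis
    using mu_pos by (simp add: field_simps)
qed

lemma xstar_has_derivative:
  assumes "\<beta> \<in> prob_simplex"
  shows "(xstar f has_derivative
           (\<lambda>h. - (matrix_inv (hessbeta H \<beta> (xstar f \<beta>))
                    *v (transpose (jacobianF g (xstar f \<beta>)) *v h))))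
         (at \<beta> within prob_simplex)"
proof -
  have "invertible (hessbeta H \<beta> (xstar f \<beta>))"
    using mu_pos hessbeta_coercive[OF assms hess_lower] by (rule invertible_if_coercive)
  then show ?thesis
    using has_derivative_implicit_within[where \<Phi> = "\<lambda>z. gradbeta g (fst z) (snd z)"
        and X = "xstar f" and A = "\<lambda>h. transpose (jacobianF g (xstar f \<beta>)) *v h"
        and B = "\<lambda>k. hessbeta H \<beta> (xstar f \<beta>) *v k"
        and Binv = "\<lambda>k. matrix_inv (hessbeta H \<beta> (xstar f \<beta>)) *v k",
        OF has_derivative_gradbeta_joint[OF hess] matrix_vector_mul_bounded_linear
        matrix_vector_mul_bounded_linear matrix_inv_mult_vec_cancel _ assms xstar_lipschitz[OF assms]]
    by (simp add: gradbeta_xstar)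
qed

lemma diffeomorphism_on_xstar:
  "diffeomorphism_on (\<lambda>\<beta>. (xstar f \<beta>, \<beta>)) prob_simplex (pareto_manifold g)"
  unfolding diffeomorphism_on_def
proof (intro conjI exI[of _ snd] ballI)
  show "bij_betw (\<lambda>\<beta>. (xstar f \<beta>, \<beta>)) prob_simplex (pareto_manifold g)"
    by (rule bij_betw_byWitness[where f' = snd])
      (auto simp: pareto_manifold_iff gradbeta_eq_0_iff)
  show "(\<lambda>\<beta>. (xstar f \<beta>, \<beta>)) differentiable_on prob_simplex"
    unfolding differentiable_on_def differentiable_def
    using has_derivative_Pair[OF xstar_has_derivative has_derivative_ident] by blast
  show "snd differentiable_on pareto_manifold g"
    by (rule bounded_linear_imp_differentiable_on[OF bounded_linear_snd])
qed (auto simp: pareto_manifold_iff gradbeta_eq_0_iff)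

end

theorem proposition1:
  fixes f :: "'n::finite \<Rightarrow> real ^ 'd::finite \<Rightarrow> real"
    and g :: "'n \<Rightarrow> real ^ 'd \<Rightarrow> real ^ 'd"
    and H :: "'n \<Rightarrow> real ^ 'd \<Rightarrow> real ^ 'd ^ 'd"
    and \<mu> L :: real
  assumes mu_pos: "0 < \<mu>" and mu_le_L: "\<mu> \<le> L"
    and grad: "\<And>i x. (f i has_derivative (\<lambda>v. g i x \<bullet> v)) (at x)"
    and hess: "\<And>i x. (g i has_derivative (\<lambda>v. H i x *v v)) (at x)"
    and hess_bounds: "\<And>i x v. \<mu> * (v \<bullet> v) \<le> v \<bullet> (H i x *v v) \<and> v \<bullet> (H i x *v v) \<le> L * (v \<bullet> v)"
  shows "(\<forall>\<beta>\<in>prob_simplex. xstar f \<beta> \<in> Pareto f \<and>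
            (xstar f has_derivative
               (\<lambda>h. - (matrix_inv (hessbeta H \<beta> (xstar f \<beta>))
                        *v (transpose (jacobianF g (xstar f \<beta>)) *v h))))
            (at \<beta> within prob_simplex))
       \<and> diffeomorphism_on (\<lambda>\<beta>. (xstar f \<beta>, \<beta>)) prob_simplex (pareto_manifold g)"
proof -
  interpret strongly_convex_family f g H \<mu>
    using mu_pos grad hess hess_bounds by unfold_locales blast+
  show ?thesis
    using xstar_Pareto xstar_has_derivative diffeomorphism_on_xstar by blast
qed

end
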